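(* Suppose the random walk $R$ is irreducible, aperiodic, positive recurrent and has negative drift, and let $F:S\to[0,\infty)$ be $C$-linear with coefficients $f_{k,i}$. Let $$f^*=\max_{k\in K}\max_{i=0,\dots,M}\max\{f_{k,i},1\},\qquad v_i=\frac{-f^*}{\sup_{n\in S:\,i\in I(n)}\{s^+_i(n)-s^-_i(n)\}}\ (i=1,\dots,M),\qquad V(n)=\sum_{i=1}^M v_i n_i^2.$$ Then there exists a constant $b_0<\infty$ such that for all $n\in S$, $u\in N_{c(n)}$ and $t\ge0$, $$|D^t_u(n)|\le V(n)+V(n+u)+b_0.$$
   Context: Let $M\ge 1$ and $S=\{0,1,2,\dots\}^M$. For $n\in S$ let $N(n)=\{u\in\{-1,0,1\}^M: n+u\in S\}$. A partition $C=\{C_k\}_{k\in K}$ ($K$ finite) of $S$ is a family of pairwise disjoint sets covering $S$ such that $N(n)=N(n')$ whenever $n,n'$ lie in the same $C_k$; write $N_k$ for this common set and $c(n)$ for the index $k$ with $n\in C_k$. The random walk $R$ is a discrete-time Markov chain on $S$ with transition probabilities $P(n,n+u)=p_{c(n),u}\ge0$ for $u\in N_{c(n)}$, $P(n,m)=0$ if $m-n\notin N_{c(n)}$, and $\sum_{u\in N_k}p_{k,u}=1$ for every $k$. For $n\in S$, $I(n)=\{i\in\{1,\dots,M\}: n_i>0\}$, $s^+_i(n)=\sum_{u\in N_{c(n)}:u_i=1}p_{c(n),u}$ and $s^-_i(n)=\sum_{u\in N_{c(n)}:u_i=-1}p_{c(n),u}$. $R$ has negative drift if $\sup_{n\in S,\,i\in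 I(n)}\{s^+_i(n)-s^-_i(n)\}<0$. A function $F:S\to[0,\infty)$ is $C$-linear if there are real coefficients $f_{k,i}$ with $F(n)=f_{k,0}+\sum_{i=1}^M f_{k,i}n_i$ for all $n\in C_k$, $k\in K$. For $t\ge0$, $F^t(n)=\sum_{k=0}^{t-1}\sum_{m\in S}P^k(n,m)F(m)$, where $P^k$ is the $k$-step transition matrix, and the bias terms are $D^t_u(n)=F^t(n+u)-F^t(n)$ for $u\in N_{c(n)}$. *)

theory Defs
  imports "HOL-Analysis.Analysis"
begin

text \<open>States: vectors n :: nat \<Rightarrow> int, coordinates 1..M, zero outside {1..M}.\<close>

definition vadd :: "(nat \<Rightarrow> int) \<Rightarrow> (nat \<Rightarrow> int) \<Rightarrow> (nat \<Rightarrow> int)" where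
  "vadd n u = (\<lambda>i. n i + u i)"

definition Sp :: "nat \<Rightarrow> (nat \<Rightarrow> int) set" where
  "Sp M = {n. (\<forall>i\<in>{1..M}. 0 \<le> n i) \<and> (\<forall>i. i \<notin> {1..M} \<longrightarrow> n i = 0)}"

definition Uset :: "nat \<Rightarrow> (nat \<Rightarrow> int) set" where
  "Uset M = {u. (\<forall>i\<in>{1..M}. u i \<in> {-1, 0, 1}) \<and> (\<forall>i. i \<notin> {1..M} \<longrightarrow> u i = 0)}"

definition Nb :: "nat \<Rightarrow> (nat \<Rightarrow> int) \<Rightarrow> (nat \<Rightarrow> int) set" where
  "Nb M n = {u \<in> Uset M. vadd n u \<in> Sp M}"

text \<open>The partition C = {C_k}, k in the finite type 'k, is given by the index map c:
  C_k = {n in S. c n = k}. It is admissible if N is constant on each C_k.\<close>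
definition is_partition :: "nat \<Rightarrow> ((nat \<Rightarrow> int) \<Rightarrow> 'k) \<Rightarrow> bool" where
  "is_partition M c \<longleftrightarrow> (\<forall>n\<in>Sp M. \<forall>n'\<in>Sp M. c n = c n' \<longrightarrow> Nb M n = Nb M n')"

definition valid_probs :: "nat \<Rightarrow> ((nat \<Rightarrow> int) \<Rightarrow> 'k) \<Rightarrow> ('k \<Rightarrow> (nat \<Rightarrow> int) \<Rightarrow> real) \<Rightarrow> bool" where
  "valid_probs M c p \<longleftrightarrow>
     (\<forall>n\<in>Sp M. (\<forall>u\<in>Nb M n. 0 \<le> p (c n) u) \<and> (\<Sum>u\<in>Nb M n. p (c n) u) = 1)"

definition trans :: "nat \<Rightarrow> ((nat \<Rightarrow> int) \<Rightarrow> 'k) \<Rightarrow> ('k \<Rightarrow> (nat \<Rightarrow> int) \<Rightarrow> real)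
    \<Rightarrow> (nat \<Rightarrow> int) \<Rightarrow> (nat \<Rightarrow> int) \<Rightarrow> real" where
  "trans M c p n m = (if (\<lambda>i. m i - n i) \<in> Nb M n then p (c n) (\<lambda>i. m i - n i) else 0)"

fun Pk :: "nat \<Rightarrow> ((nat \<Rightarrow> int) \<Rightarrow> 'k) \<Rightarrow> ('k \<Rightarrow> (nat \<Rightarrow> int) \<Rightarrow> real)
    \<Rightarrow> nat \<Rightarrow> (nat \<Rightarrow> int) \<Rightarrow> (nat \<Rightarrow> int) \<Rightarrow> real" where
  "Pk M c p 0 n m = (if n = m then 1 else 0)"
| "Pk M c p (Suc k) n m = (\<Sum>u\<in>Nb M n. trans M c p n (vadd n u) * Pk M c p k (vadd n u) m)"

text \<open>First-passage probabilities: probability that, starting in n, the walk visits m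
  for the first time (at a time \<ge> 1) exactly at time k.\<close>
fun fhit :: "nat \<Rightarrow> ((nat \<Rightarrow> int) \<Rightarrow> 'k) \<Rightarrow> ('k \<Rightarrow> (nat \<Rightarrow> int) \<Rightarrow> real)
    \<Rightarrow> nat \<Rightarrow> (nat \<Rightarrow> int) \<Rightarrow> (nat \<Rightarrow> int) \<Rightarrow> real" where
  "fhit M c p 0 n m = 0"
| "fhit M c p (Suc 0) n m = trans M c p n m"
| "fhit M c p (Suc (Suc k)) n m =
     (\<Sum>u\<in>Nb M n. if vadd n u = m then 0
                   else trans M c p n (vadd n u) * fhit M c p (Suc k) (vadd n u) m)"

definition irreducible_rw where
  "irreducible_rw M c p \<longleftrightarrow> (\<forall>n\<in>Sp M. \<forall>m\<in>Sp M. \<exists>k. Pk M c p k n m > 0)"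

definition period_rw where
  "period_rw M c p n = Gcd {k. 0 < k \<and> Pk M c p k n n > 0}"

definition aperiodic_rw where
  "aperiodic_rw M c p \<longleftrightarrow> (\<forall>n\<in>Sp M. period_rw M c p n = 1)"

definition positive_recurrent_rw where
  "positive_recurrent_rw M c p \<longleftrightarrow>
     (\<forall>n\<in>Sp M. (\<lambda>k. fhit M c p k n n) sums 1 \<and> summable (\<lambda>k. real k * fhit M c p k n n))"

definition s_plus where
  "s_plus M c p i n = (\<Sum>u\<in>{u\<in>Nb M n. u i = 1}. p (c n) u)"

definition s_minus where
  "s_minus M c p i n = (\<Sum>u\<in>{u\<in>Nb M n. u i = -1}. p (c n) u)"

definition negative_drift where
  "negative_drift M c p \<longleftrightarrow>
     Sup {s_plus M c p i n - s_minus M c p i n | n i. n \<in> Sp M \<and> i \<in> {1..M} \<and> 0 < n i} < 0"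

definition drift_sup where
  "drift_sup M c p i = Sup {s_plus M c p i n - s_minus M c p i n | n. n \<in> Sp M \<and> 0 < n i}"

definition C_linear where
  "C_linear M c F f \<longleftrightarrow>
     (\<forall>n\<in>Sp M. F n = f (c n) 0 + (\<Sum>i=1..M. f (c n) i * real_of_int (n i)))"

definition fstar :: "nat \<Rightarrow> ('k::finite \<Rightarrow> nat \<Rightarrow> real) \<Rightarrow> real" where
  "fstar M f = Max {max (f k i) 1 | k i. i \<le> M}"

definition vcoef where
  "vcoef M c p f i = - fstar M f / drift_sup M c p i"

definition Vfun where
  "Vfun M c p f n = (\<Sum>i=1..M. vcoef M c p f i * (real_of_int (n i))\<^sup>2)"

definition Ft where
  "Ft M c p F t n = (\<Sum>k<t. infsum (\<lambda>m. Pk M c p k n m * F m) (Sp M))"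

end

theory Submission
  imports Defs
begin

text \<open>Split \<open>F\<^sup>t(n) = \<Sum>\<^sub>k\<^sub><\<^sub>t P\<^sup>k F(n)\<close> at the first visit \<open>\<tau>\<close> of the walk to \<open>0\<close>. If \<open>G(n)\<close> is the
  expected \<open>F\<close>-cost before \<open>\<tau>\<close> and \<open>B\<close> bounds every \<open>P\<^sup>k F(0)\<close>, then
  \<open>G(n) + F\<^sup>t(0) - B E\<^sub>n[\<tau>] \<le> F\<^sup>t(n) \<le> G(n) + F\<^sup>t(0)\<close>, so \<open>|D\<^sup>t\<^sub>u(n)|\<close> is at most the expected cost
  of \<open>F + B\<close> before reaching \<open>0\<close> from \<open>n\<close> plus the same from \<open>n + u\<close>.
  A Foster--Lyapunov argument bounds such costs by \<open>V + const\<close>: the choice of \<open>v\<^sub>i\<close> gives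
  \<open>PV - V \<le> \<Sum>v\<^sub>i - 2 f\<^sup>* |n|\<^sub>1\<close>, which beats \<open>F + B \<le> f\<^sup>* (1 + |n|\<^sub>1) + B\<close> outside a finite set of
  states, and on that finite set irreducibility makes the probability of avoiding \<open>0\<close> for
  \<open>L\<close> steps uniformly less than \<open>1\<close>, which pays for the rest. The same bound at \<open>0\<close> yields \<open>B\<close>.\<close>

lemma Sp_nonneg: "n \<in> Sp M \<Longrightarrow> 0 \<le> n i"
  by (cases "i \<in> {1..M}") (auto simp: Sp_def)

lemma vadd_in_Sp: "u \<in> Nb M n \<Longrightarrow> vadd n u \<in> Sp M"
  by (simp add: Nb_def)

lemma Nb_coord_cases: "u \<in> Nb M n \<Longrightarrow> u i = -1 \<or> u i = 0 \<or> u i = 1"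
  by (cases "i \<in> {1..M}") (auto simp: Nb_def Uset_def)

lemma Nb_abs_le_1: "u \<in> Nb M n \<Longrightarrow> \<bar>u i\<bar> \<le> 1"
  using Nb_coord_cases[of u M n i] by auto

lemma trans_vadd: "u \<in> Nb M n \<Longrightarrow> trans M c p n (vadd n u) = p (c n) u"
  by (simp add: trans_def vadd_def)

lemma finite_Sp_bounded: "finite {m \<in> Sp M. \<forall>i\<in>{1..M}. m i \<le> r i}"
proof (rule finite_subset)
  let ?ext = "\<lambda>g i. if i \<in> {1..M} then g i else 0 :: int"
  show "{m \<in> Sp M. \<forall>i\<in>{1..M}. m i \<le> r i} \<subseteq> ?ext ` (\<Pi>\<^sub>E i\<in>{1..M}. {0..r i})"
  proof
    fix m assume "m \<in> {m \<in> Sp M. \<forall>i\<in>{1..M}. m i \<le> r i}"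
    then have "restrict m {1..M} \<in> (\<Pi>\<^sub>E i\<in>{1..M}. {0..r i})" "m = ?ext (restrict m {1..M})"
      by (auto simp: Sp_def fun_eq_iff)
    then show "m \<in> ?ext ` (\<Pi>\<^sub>E i\<in>{1..M}. {0..r i})" by blast
  qed
qed (intro finite_imageI finite_PiE; simp)

lemma finite_Nb: "finite (Nb M n)"
proof (rule finite_subset)
  show "Nb M n \<subseteq> (\<lambda>m i. m i - n i) ` {m \<in> Sp M. \<forall>i\<in>{1..M}. m i \<le> n i + 1}"
  proof
    fix u assume u: "u \<in> Nb M n"
    then have "vadd n u \<in> {m \<in> Sp M. \<forall>i\<in>{1..M}. m i \<le> n i + 1}"
      using vadd_in_Sp[OF u] Nb_abs_le_1[OF u] by (auto simp: vadd_def abs_le_iff)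
    moreover have "u = (\<lambda>i. vadd n u i - n i)" by (simp add: vadd_def)
    ultimately show "u \<in> (\<lambda>m i. m i - n i) ` {m \<in> Sp M. \<forall>i\<in>{1..M}. m i \<le> n i + 1}" by blast
  qed
qed (rule finite_imageI[OF finite_Sp_bounded])

definition l1norm :: "nat \<Rightarrow> (nat \<Rightarrow> int) \<Rightarrow> real" where
  "l1norm M n = (\<Sum>i=1..M. real_of_int (n i))"

lemma l1norm_nonneg: "n \<in> Sp M \<Longrightarrow> 0 \<le> l1norm M n"
  unfolding l1norm_def by (intro sum_nonneg) (simp add: Sp_nonneg)

lemma coord_le_l1norm: "n \<in> Sp M \<Longrightarrow> i \<in> {1..M} \<Longrightarrow> real_of_int (n i) \<le> l1norm M n"
  unfolding l1norm_def by (rule member_le_sum) (auto simp: Sp_nonneg)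

lemma finite_l1norm_less: "finite {n \<in> Sp M. l1norm M n < r}"
proof (rule finite_subset[OF _ finite_Sp_bounded])
  show "{n \<in> Sp M. l1norm M n < r} \<subseteq> {n \<in> Sp M. \<forall>i\<in>{1..M}. n i \<le> (\<lambda>_. \<lceil>r\<rceil>) i}"
    using coord_le_l1norm by (fastforce simp: le_ceiling_iff)
qed

lemma fstar_ge_1: "1 \<le> fstar M f"
  and coeff_le_fstar: "i \<le> M \<Longrightarrow> f k i \<le> fstar M f"
proof -
  have fin: "finite {max (f k i) 1 | k i. i \<le> M}"
    by (rule finite_subset[of _ "(\<lambda>(k, i). max (f k i) 1) ` (UNIV \<times> {..M})"]) auto
  have "max (f k i) 1 \<le> fstar M f" if "i \<le> M" for k i
    unfolding fstar_def using that by (intro Max_ge[OF fin]) auto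
  then show "1 \<le> fstar M f" "i \<le> M \<Longrightarrow> f k i \<le> fstar M f"
    by (metis le_zero_eq max.bounded_iff zero_le)+
qed

lemma C_linear_le_fstar:
  assumes "C_linear M c F f" "n \<in> Sp M"
  shows "F n \<le> fstar M f * (1 + l1norm M n)"
proof -
  have "F n = f (c n) 0 + (\<Sum>i=1..M. f (c n) i * real_of_int (n i))"
    using assms by (simp add: C_linear_def)
  also have "\<dots> \<le> fstar M f + (\<Sum>i=1..M. fstar M f * real_of_int (n i))"
    by (intro add_mono sum_mono mult_right_mono coeff_le_fstar) (auto simp: Sp_nonneg[OF assms(2)])
  finally show ?thesis by (simp add: l1norm_def sum_distrib_left algebra_simps)
qed

locale walk =
  fixes M :: nat
    and c :: "(nat \<Rightarrow> int) \<Rightarrow> 'k"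
    and p :: "'k \<Rightarrow> (nat \<Rightarrow> int) \<Rightarrow> real"
  assumes valid_probs: "valid_probs M c p"
begin

lemma sum_p_eq_1: "n \<in> Sp M \<Longrightarrow> (\<Sum>u\<in>Nb M n. p (c n) u) = 1"
  using valid_probs by (simp add: valid_probs_def)

lemma p_nonneg: "n \<in> Sp M \<Longrightarrow> u \<in> Nb M n \<Longrightarrow> 0 \<le> p (c n) u"
  using valid_probs by (simp add: valid_probs_def)

definition trans_op :: "((nat \<Rightarrow> int) \<Rightarrow> real) \<Rightarrow> (nat \<Rightarrow> int) \<Rightarrow> real" where
  "trans_op g n = (\<Sum>u\<in>Nb M n. p (c n) u * g (vadd n u))"

lemma trans_op_mono:
  "n \<in> Sp M \<Longrightarrow> (\<And>m. m \<in> Sp M \<Longrightarrow> g m \<le> h m) \<Longrightarrow> trans_op g n \<le> trans_op h n"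
  unfolding trans_op_def by (intro sum_mono mult_left_mono) (auto simp: p_nonneg vadd_in_Sp)

lemma trans_op_nonneg: "n \<in> Sp M \<Longrightarrow> (\<And>m. m \<in> Sp M \<Longrightarrow> 0 \<le> g m) \<Longrightarrow> 0 \<le> trans_op g n"
  unfolding trans_op_def by (intro sum_nonneg mult_nonneg_nonneg) (auto simp: p_nonneg vadd_in_Sp)

lemma trans_op_const: "n \<in> Sp M \<Longrightarrow> trans_op (\<lambda>_. a) n = a"
  unfolding trans_op_def by (simp add: sum_distrib_right[symmetric] sum_p_eq_1)

lemma trans_op_add: "trans_op (\<lambda>m. g m + h m) n = trans_op g n + trans_op h n"
  unfolding trans_op_def by (simp add: distrib_left sum.distrib)

lemma trans_op_diff: "trans_op (\<lambda>m. g m - h m) n = trans_op g n - trans_op h n"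
  unfolding trans_op_def by (simp add: right_diff_distrib sum_subtractf)

lemma trans_op_cmult: "trans_op (\<lambda>m. a * g m) n = a * trans_op g n"
  unfolding trans_op_def by (simp add: sum_distrib_left algebra_simps)

lemma trans_op_sum: "trans_op (\<lambda>m. \<Sum>l\<in>I. g l m) n = (\<Sum>l\<in>I. trans_op (g l) n)"
  unfolding trans_op_def by (simp add: sum_distrib_left sum.swap[of _ I])

lemma funpow_trans_op_nonneg:
  "(\<And>m. m \<in> Sp M \<Longrightarrow> 0 \<le> g m) \<Longrightarrow> n \<in> Sp M \<Longrightarrow> 0 \<le> (trans_op ^^ k) g n"
  by (induction k arbitrary: n) (auto intro: trans_op_nonneg)

lemma Pk_Suc_trans_op: "Pk M c p (Suc k) n m = trans_op (\<lambda>x. Pk M c p k x m) n"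
  unfolding trans_op_def by (simp add: trans_vadd cong: sum.cong)

lemma Pk_nonneg: "n \<in> Sp M \<Longrightarrow> 0 \<le> Pk M c p k n m"
proof (induction k arbitrary: n)
  case (Suc k)
  then show ?case
    unfolding Pk_Suc_trans_op by (intro trans_op_nonneg) auto
qed simp

lemma Pk_nonzero_imp:
  "n \<in> Sp M \<Longrightarrow> Pk M c p k n m \<noteq> 0 \<Longrightarrow> m \<in> Sp M \<and> (\<forall>i. m i \<le> n i + int k)"
proof (induction k arbitrary: n)
  case 0
  then show ?case by (simp split: if_splits)
next
  case (Suc k)
  have "trans_op (\<lambda>x. Pk M c p k x m) n \<noteq> 0"
    using Suc.prems(2) by (metis Pk_Suc_trans_op)
  then obtain u where u: "u \<in> Nb M n" "Pk M c p k (vadd n u) m \<noteq> 0"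
    unfolding trans_op_def by (metis (no_types, lifting) mult_eq_0_iff sum.neutral)
  have "m \<in> Sp M" "\<forall>i. m i \<le> vadd n u i + int k"
    using Suc.IH[OF vadd_in_Sp[OF u(1)] u(2)] by auto
  moreover have "vadd n u i \<le> n i + 1" for i
    using Nb_abs_le_1[OF u(1), of i] by (simp add: vadd_def)
  ultimately show ?case by (smt (verit) of_nat_Suc)
qed

lemma sum_Pk_eq_funpow:
  assumes "n \<in> Sp M" "finite T" "\<forall>m. Pk M c p k n m \<noteq> 0 \<longrightarrow> m \<in> T"
  shows "(\<Sum>m\<in>T. Pk M c p k n m * g m) = (trans_op ^^ k) g n"
  using assms
proof (induction k arbitrary: n)
  case 0
  then have "n \<in> T" by auto
  have "(\<Sum>m\<in>T. Pk M c p 0 n m * g m) = (\<Sum>m\<in>T. if n = m then g m else 0)"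
    by (rule sum.cong) auto
  with \<open>n \<in> T\<close> 0 show ?case by simp
next
  case (Suc k)
  have "(\<Sum>m\<in>T. p (c n) u * Pk M c p k (vadd n u) m * g m) = p (c n) u * (trans_op ^^ k) g (vadd n u)"
    if u: "u \<in> Nb M n" for u
  proof (cases "p (c n) u = 0")
    case False
    have "p (c n) u * Pk M c p k (vadd n u) m \<le> Pk M c p (Suc k) n m" for m
      unfolding Pk_Suc_trans_op trans_op_def
      by (rule member_le_sum[OF u _ finite_Nb])
        (auto intro!: mult_nonneg_nonneg p_nonneg Pk_nonneg vadd_in_Sp Suc.prems(1))
    then have "\<forall>m. Pk M c p k (vadd n u) m \<noteq> 0 \<longrightarrow> m \<in> T"
      using Suc.prems(3) False p_nonneg[OF Suc.prems(1) u] Pk_nonneg[OF vadd_in_Sp[OF u]]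
      by (metis antisym mult_eq_0_iff mult_nonneg_nonneg)
    then show ?thesis
      using Suc.IH[OF vadd_in_Sp[OF u] Suc.prems(2)] by (simp add: sum_distrib_left[symmetric] mult.assoc)
  qed simp
  note term_eq = this
  have "(\<Sum>m\<in>T. Pk M c p (Suc k) n m * g m)
      = (\<Sum>m\<in>T. \<Sum>u\<in>Nb M n. p (c n) u * Pk M c p k (vadd n u) m * g m)"
    by (simp add: Pk_Suc_trans_op trans_op_def sum_distrib_right del: Pk.simps(2))
  also have "\<dots> = (\<Sum>u\<in>Nb M n. \<Sum>m\<in>T. p (c n) u * Pk M c p k (vadd n u) m * g m)"
    by (rule sum.swap)
  also have "\<dots> = (\<Sum>u\<in>Nb M n. p (c n) u * (trans_op ^^ k) g (vadd n u))"
    by (rule sum.cong) (simp_all add: term_eq)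
  also have "\<dots> = (trans_op ^^ Suc k) g n"
    by (simp add: trans_op_def)
  finally show ?case .
qed

lemma infsum_Pk_eq_funpow:
  assumes n: "n \<in> Sp M"
  shows "infsum (\<lambda>m. Pk M c p k n m * g m) (Sp M) = (trans_op ^^ k) g n"
proof -
  define T where "T = {m \<in> Sp M. \<forall>i\<in>{1..M}. m i \<le> n i + int k}"
  have T: "finite T" "\<forall>m. Pk M c p k n m \<noteq> 0 \<longrightarrow> m \<in> T"
    using finite_Sp_bounded Pk_nonzero_imp[OF n] by (auto simp: T_def)
  have "infsum (\<lambda>m. Pk M c p k n m * g m) (Sp M) = infsum (\<lambda>m. Pk M c p k n m * g m) T"
    by (rule infsum_cong_neutral) (use T in \<open>auto simp: T_def\<close>)
  also have "\<dots> = (trans_op ^^ k) g n"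
    using sum_Pk_eq_funpow[OF n T] T(1) by simp
  finally show ?thesis .
qed

definition cumulative :: "((nat \<Rightarrow> int) \<Rightarrow> real) \<Rightarrow> nat \<Rightarrow> (nat \<Rightarrow> int) \<Rightarrow> real" where
  "cumulative g t n = (\<Sum>k<t. (trans_op ^^ k) g n)"

lemma Ft_eq_cumulative: "n \<in> Sp M \<Longrightarrow> Ft M c p F t n = cumulative F t n"
  by (simp add: Ft_def cumulative_def infsum_Pk_eq_funpow)

lemma cumulative_Suc: "cumulative g (Suc t) n = g n + trans_op (cumulative g t) n"
  unfolding cumulative_def
  by (simp add: sum.lessThan_Suc_shift trans_op_sum funpow_swap1 del: sum.lessThan_Suc)

text \<open>Probability that the walk started in \<open>n\<close> does not visit \<open>z\<close> at any of the times \<open>0, \<dots>, L\<close>.\<close>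

fun survival :: "(nat \<Rightarrow> int) \<Rightarrow> nat \<Rightarrow> (nat \<Rightarrow> int) \<Rightarrow> real" where
  "survival z 0 n = (if n = z then 0 else 1)"
| "survival z (Suc L) n = (if n = z then 0 else trans_op (survival z L) n)"

lemma survival_nonneg: "n \<in> Sp M \<Longrightarrow> 0 \<le> survival z L n"
  by (induction L arbitrary: n) (auto intro!: trans_op_nonneg)

lemma survival_le_1: "n \<in> Sp M \<Longrightarrow> survival z L n \<le> 1"
proof (induction L arbitrary: n)
  case (Suc L)
  then have "trans_op (survival z L) n \<le> trans_op (\<lambda>_. 1) n"
    by (intro trans_op_mono) auto
  with Suc.prems show ?case by (simp add: trans_op_const)
qed simp

lemma survival_Suc_le: "n \<in> Sp M \<Longrightarrow> survival z (Suc L) n \<le> survival z L n"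
proof (induction L arbitrary: n)
  case 0
  then have "trans_op (survival z 0) n \<le> trans_op (\<lambda>_. 1) n"
    using survival_le_1 by (intro trans_op_mono) auto
  with 0 show ?case by (simp add: trans_op_const)
next
  case (Suc L)
  then have "trans_op (survival z (Suc L)) n \<le> trans_op (survival z L) n"
    by (intro trans_op_mono) auto
  then show ?case by simp
qed

lemma survival_antimono: "n \<in> Sp M \<Longrightarrow> L \<le> L' \<Longrightarrow> survival z L' n \<le> survival z L n"
  using decseqD[OF decseq_SucI[of "\<lambda>L. survival z L n"]] survival_Suc_le by blast

lemma survival_plus_Pk_le_1: "n \<in> Sp M \<Longrightarrow> survival z k n + Pk M c p k n z \<le> 1"
proof (induction k arbitrary: n)
  case (Suc k)
  have "Pk M c p (Suc k) n z \<le> trans_op (\<lambda>x. 1 - survival z k x) n"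
    unfolding Pk_Suc_trans_op using Suc by (intro trans_op_mono) (auto simp: algebra_simps)
  moreover have "trans_op (\<lambda>x. 1 - survival z k x) n = 1 - trans_op (survival z k) n"
    using trans_op_diff[of "\<lambda>_. 1"] trans_op_const[OF Suc.prems] by simp
  moreover have "0 \<le> trans_op (survival z k) n"
    using survival_nonneg by (intro trans_op_nonneg[OF Suc.prems])
  ultimately show ?case by (auto simp del: Pk.simps(2))
qed auto

lemma uniform_survival_bound:
  assumes A: "finite A" "A \<subseteq> Sp M" and reach: "\<forall>n\<in>A. \<exists>k. 0 < Pk M c p k n z"
  shows "\<exists>L e. 0 < e \<and> (\<forall>n\<in>A. survival z L n \<le> 1 - e)"
proof -
  have "eventually (\<lambda>L. survival z L n < 1) sequentially" if n: "n \<in> A" for n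
  proof -
    from reach n obtain k where "0 < Pk M c p k n z" by blast
    then have "survival z k n < 1"
      using survival_plus_Pk_le_1[where n = n and k = k and z = z] A(2) n by auto
    moreover have "survival z L n \<le> survival z k n" if "k \<le> L" for L
      using survival_antimono that A(2) n by blast
    ultimately show ?thesis
      unfolding eventually_sequentially by (meson le_less_trans)
  qed
  then have "eventually (\<lambda>L. \<forall>n\<in>A. survival z L n < 1) sequentially"
    by (intro eventually_ball_finite A(1)) auto
  then obtain L where L: "\<forall>n\<in>A. survival z L n < 1"
    by (auto simp: eventually_sequentially)
  define e where "e = Min (insert 1 ((\<lambda>n. 1 - survival z L n) ` A))"
  have "0 < e" using L A(1) by (simp add: e_def)
  moreover have "e \<le> 1 - survival z L n" if "n \<in> A" for n
    unfolding e_def by (rule Min_le) (use that A(1) in auto)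
  ultimately show ?thesis
    by (intro exI[of _ L] exI[of _ e]) (auto simp: algebra_simps)
qed

text \<open>Expected value of \<open>\<Sum> h(X\<^sub>k)\<close> over the times \<open>k < min t \<tau>\<close>, where \<open>\<tau> \<ge> 0\<close> is the first time the
  walk \<open>X\<close> started in \<open>n\<close> is at \<open>z\<close>.\<close>

fun hit_cost :: "(nat \<Rightarrow> int) \<Rightarrow> ((nat \<Rightarrow> int) \<Rightarrow> real) \<Rightarrow> nat \<Rightarrow> (nat \<Rightarrow> int) \<Rightarrow> real" where
  "hit_cost z h 0 n = 0"
| "hit_cost z h (Suc t) n = (if n = z then 0 else h n + trans_op (hit_cost z h t) n)"

lemma hit_cost_at_target: "hit_cost z h t z = 0"
  by (cases t) auto

lemma hit_cost_nonneg:
  "(\<And>m. m \<in> Sp M \<Longrightarrow> 0 \<le> h m) \<Longrightarrow> n \<in> Sp M \<Longrightarrow> 0 \<le> hit_cost z h t n"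
  by (induction t arbitrary: n) (auto intro!: add_nonneg_nonneg trans_op_nonneg)

lemma hit_cost_Suc_ge:
  assumes "\<And>m. m \<in> Sp M \<Longrightarrow> 0 \<le> h m"
  shows "n \<in> Sp M \<Longrightarrow> hit_cost z h t n \<le> hit_cost z h (Suc t) n"
proof (induction t arbitrary: n)
  case 0
  then show ?case using hit_cost_nonneg[OF assms] by (simp del: hit_cost.simps(2))
next
  case (Suc t)
  then have "trans_op (hit_cost z h t) n \<le> trans_op (hit_cost z h (Suc t)) n"
    by (intro trans_op_mono)
  then show ?case by simp
qed

lemma hit_cost_add_const:
  "hit_cost z (\<lambda>m. h m + a) t n = hit_cost z h t n + a * hit_cost z (\<lambda>_. 1) t n"
proof (induction t arbitrary: n)
  case (Suc t)
  then have "hit_cost z (\<lambda>m. h m + a) t = (\<lambda>m. hit_cost z h t m + a * hit_cost z (\<lambda>_. 1) t m)"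
    by auto
  then show ?case by (simp add: trans_op_add trans_op_cmult algebra_simps)
qed simp

lemma hit_cost_le_superharmonic:
  assumes U_nonneg: "\<forall>m\<in>Sp M. 0 \<le> U m"
    and super: "\<forall>m\<in>Sp M. m \<noteq> z \<longrightarrow> h m + trans_op U m \<le> U m"
  shows "n \<in> Sp M \<Longrightarrow> hit_cost z h t n \<le> U n"
proof (induction t arbitrary: n)
  case (Suc t)
  then have "trans_op (hit_cost z h t) n \<le> trans_op U n"
    by (intro trans_op_mono)
  with Suc.prems U_nonneg super show ?case by fastforce
qed (use U_nonneg in simp)

text \<open>Foster--Lyapunov bound: \<open>W + K \<Sum>\<^sub>l\<^sub><\<^sub>L survival z l\<close> is superharmonic for the cost \<open>h\<close>,
  since one step lowers the survival sum by \<open>1 - survival z L \<ge> e\<close> on \<open>A\<close>.\<close>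

lemma hit_cost_le_Lyapunov:
  assumes W_nonneg: "\<forall>m\<in>Sp M. 0 \<le> W m"
    and A: "finite A" "A \<subseteq> Sp M" and reach: "\<forall>n\<in>A. \<exists>k. 0 < Pk M c p k n z"
    and "0 \<le> b"
    and drift_in: "\<forall>n\<in>A. n \<noteq> z \<longrightarrow> h n + trans_op W n \<le> W n + b"
    and drift_out: "\<forall>n\<in>Sp M - A. n \<noteq> z \<longrightarrow> h n + trans_op W n \<le> W n"
  shows "\<exists>K\<ge>0. \<forall>t. \<forall>n\<in>Sp M. hit_cost z h t n \<le> W n + K"
proof -
  obtain L e where e: "0 < e" "\<forall>n\<in>A. survival z L n \<le> 1 - e"
    using uniform_survival_bound[OF A reach] by blast
  define K where "K = b / e"
  have K: "0 \<le> K" "K * e = b" using \<open>0 \<le> b\<close> e(1) by (auto simp: K_def)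
  define S where "S = (\<lambda>n. \<Sum>l<L. survival z l n)"
  have S: "0 \<le> S n" "S n \<le> L" if "n \<in> Sp M" for n
    using sum_mono[of "{..<L}" "\<lambda>l. survival z l n" "\<lambda>_. 1"]
    by (auto simp: S_def that survival_nonneg survival_le_1 intro: sum_nonneg)
  have trans_S: "trans_op S n = S n + survival z L n - 1" if "n \<noteq> z" for n
    using that sum.lessThan_Suc_shift[of "\<lambda>l. survival z l n" L]
    by (simp add: S_def trans_op_sum)
  have "hit_cost z h t n \<le> W n + K * S n" if "n \<in> Sp M" for t n
  proof (rule hit_cost_le_superharmonic[OF _ _ that])
    show "\<forall>m\<in>Sp M. 0 \<le> W m + K * S m" using W_nonneg S K by auto
    show "\<forall>m\<in>Sp M. m \<noteq> z \<longrightarrow> h m + trans_op (\<lambda>m. W m + K * S m) m \<le> W m + K * S m"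
    proof (intro ballI impI)
      fix m assume m: "m \<in> Sp M" "m \<noteq> z"
      have "h m + trans_op W m + K * (survival z L m - 1) \<le> W m"
      proof (cases "m \<in> A")
        case True
        then have "K * (survival z L m - 1) \<le> - b"
          using e(2) K mult_left_mono[of "survival z L m - 1" "- e" K] by auto
        then show ?thesis using drift_in True m(2) by fastforce
      next
        case False
        then show ?thesis using drift_out m K(1) survival_le_1[OF m(1), where L = L and z = z]
          by (smt (verit) DiffI mult_nonneg_nonpos)
      qed
      then show "h m + trans_op (\<lambda>m. W m + K * S m) m \<le> W m + K * S m"
        by (simp add: trans_op_add trans_op_cmult trans_S[OF m(2)] algebra_simps)
    qed
  qed
  then show ?thesis
    using S(2) K(1) by (intro exI[of _ "K * L"]) (force intro: order_trans mult_left_mono)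
qed

lemma funpow_le_hit_cost_increment:
  assumes h_nonneg: "\<And>m. m \<in> Sp M \<Longrightarrow> 0 \<le> h m" and z: "z \<in> Sp M"
  shows "n \<in> Sp M \<Longrightarrow>
    (trans_op ^^ t) h n \<le> hit_cost z h (Suc t) n - hit_cost z h t n + h z + trans_op (hit_cost z h t) z"
proof (induction t arbitrary: n)
  case 0
  then show ?case using h_nonneg[OF z] by (simp add: trans_op_def)
next
  case (Suc t)
  let ?G = "hit_cost z h"
  have "(trans_op ^^ Suc t) h n
      \<le> trans_op (\<lambda>m. ?G (Suc t) m - ?G t m + (h z + trans_op (?G t) z)) n"
    using Suc by (simp add: add.assoc) (intro trans_op_mono; simp add: add.assoc)
  also have "\<dots> = trans_op (?G (Suc t)) n - trans_op (?G t) n + h z + trans_op (?G t) z"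
    by (simp add: trans_op_add trans_op_diff trans_op_const[OF Suc.prems] del: hit_cost.simps)
  also have "\<dots> \<le> ?G (Suc (Suc t)) n - ?G (Suc t) n + h z + trans_op (?G (Suc t)) z"
  proof (cases "n = z")
    case True
    then show ?thesis by (simp add: hit_cost_at_target del: hit_cost.simps(2))
  next
    case False
    have "trans_op (?G t) z \<le> trans_op (?G (Suc t)) z"
      using hit_cost_Suc_ge[OF h_nonneg] by (intro trans_op_mono[OF z])
    with False show ?thesis by simp
  qed
  finally show ?case .
qed

lemma funpow_at_target_le:
  assumes h_nonneg: "\<And>m. m \<in> Sp M \<Longrightarrow> 0 \<le> h m" and z: "z \<in> Sp M"
    and bound: "\<forall>t. \<forall>n\<in>Sp M. hit_cost z h t n \<le> W n + K"
  shows "(trans_op ^^ t) h z \<le> h z + trans_op (\<lambda>m. W m + K) z"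
proof -
  have "trans_op (hit_cost z h t) z \<le> trans_op (\<lambda>m. W m + K) z"
    using bound by (intro trans_op_mono[OF z]) auto
  then show ?thesis
    using funpow_le_hit_cost_increment[where h = h and t = t, OF h_nonneg z z]
    by (simp add: hit_cost_at_target)
qed

text \<open>Decomposing at the first visit \<open>\<tau>\<close> to \<open>z\<close>, \<open>cumulative h t n\<close> is the cost before \<open>\<tau>\<close>
  plus the mean of \<open>cumulative h (t - \<tau>) z\<close>, which lies between \<open>cumulative h t z - \<tau> B\<close> and
  \<open>cumulative h t z\<close>.\<close>

lemma cumulative_sandwich:
  assumes h_nonneg: "\<And>m. m \<in> Sp M \<Longrightarrow> 0 \<le> h m" and z: "z \<in> Sp M"
    and B: "\<forall>t. (trans_op ^^ t) h z \<le> B" and n: "n \<in> Sp M"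
  shows "cumulative h t n \<le> hit_cost z h t n + cumulative h t z"
    and "hit_cost z h t n + cumulative h t z - B * hit_cost z (\<lambda>_. 1) t n \<le> cumulative h t n"
proof -
  have "cumulative h t n \<le> hit_cost z h t n + cumulative h t z
      \<and> hit_cost z h t n + cumulative h t z - B * hit_cost z (\<lambda>_. 1) t n \<le> cumulative h t n"
    using n
  proof (induction t arbitrary: n)
    case 0 then show ?case by (simp add: cumulative_def)
  next
    case (Suc t)
    show ?case
    proof (cases "n = z")
      case False
      let ?G = "hit_cost z h t" and ?T = "hit_cost z (\<lambda>_. 1) t"
      have "trans_op (cumulative h t) n \<le> trans_op (\<lambda>m. ?G m + cumulative h t z) n"
        using Suc by (intro trans_op_mono) auto
      also have "\<dots> = trans_op ?G n + cumulative h t z"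
        by (simp add: trans_op_add trans_op_const[OF Suc.prems] del: hit_cost.simps)
      finally have up: "trans_op (cumulative h t) n \<le> trans_op ?G n + cumulative h t z" .
      have "trans_op ?G n + cumulative h t z - B * trans_op ?T n
          = trans_op (\<lambda>m. ?G m + cumulative h t z - B * ?T m) n"
        by (simp add: trans_op_add trans_op_diff trans_op_cmult trans_op_const[OF Suc.prems]
            del: hit_cost.simps)
      also have "\<dots> \<le> trans_op (cumulative h t) n"
        using Suc by (intro trans_op_mono) auto
      finally have lo: "trans_op ?G n + cumulative h t z - B * trans_op ?T n \<le> trans_op (cumulative h t) n" .
      have "cumulative h t z \<le> cumulative h (Suc t) z" "cumulative h (Suc t) z \<le> cumulative h t z + B"
        using B funpow_trans_op_nonneg[OF h_nonneg z] by (auto simp: cumulative_def)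
      moreover have "cumulative h (Suc t) n = h n + trans_op (cumulative h t) n"
        by (rule cumulative_Suc)
      ultimately show ?thesis
        using up lo False by (simp add: distrib_left)
    qed (simp add: hit_cost_at_target)
  qed
  then show "cumulative h t n \<le> hit_cost z h t n + cumulative h t z"
    and "hit_cost z h t n + cumulative h t z - B * hit_cost z (\<lambda>_. 1) t n \<le> cumulative h t n"
    by auto
qed

lemma abs_cumulative_diff_le:
  assumes h_nonneg: "\<And>m. m \<in> Sp M \<Longrightarrow> 0 \<le> h m" and z: "z \<in> Sp M"
    and B: "\<forall>t. (trans_op ^^ t) h z \<le> B"
    and bound: "\<forall>t. \<forall>n\<in>Sp M. hit_cost z (\<lambda>m. h m + B) t n \<le> W n + K"
    and n: "n \<in> Sp M" and m: "m \<in> Sp M"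
  shows "\<bar>cumulative h t m - cumulative h t n\<bar> \<le> W n + W m + 2 * K"
proof -
  have "0 \<le> B" using B[rule_format, of 0] h_nonneg[OF z] by simp
  have nonneg: "0 \<le> hit_cost z h t x" "0 \<le> B * hit_cost z (\<lambda>_. 1) t x" if "x \<in> Sp M" for x
    using hit_cost_nonneg[OF h_nonneg that] hit_cost_nonneg[where h = "\<lambda>_. 1", OF _ that] \<open>0 \<le> B\<close>
    by auto
  have "hit_cost z h t x + B * hit_cost z (\<lambda>_. 1) t x \<le> W x + K" if "x \<in> Sp M" for x
    using bound that by (simp add: hit_cost_add_const)
  with cumulative_sandwich[OF h_nonneg z B n] cumulative_sandwich[OF h_nonneg z B m] nonneg n m
  show ?thesis unfolding abs_le_iff by (smt (verit))
qed

lemma s_plus_minus_s_minus_le_1: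
  assumes n: "n \<in> Sp M"
  shows "s_plus M c p i n - s_minus M c p i n \<le> 1"
proof -
  have "s_plus M c p i n \<le> (\<Sum>u\<in>Nb M n. p (c n) u)"
    unfolding s_plus_def by (intro sum_mono2) (auto simp: finite_Nb p_nonneg n)
  moreover have "0 \<le> s_minus M c p i n"
    unfolding s_minus_def by (intro sum_nonneg) (auto simp: p_nonneg n)
  ultimately show ?thesis by (simp add: sum_p_eq_1 n)
qed

lemma bdd_above_drifts: "bdd_above {s_plus M c p i n - s_minus M c p i n | n i. n \<in> Sp M \<and> P n i}"
  by (rule bdd_aboveI[of _ 1]) (auto simp: s_plus_minus_s_minus_le_1)

lemma drift_le_drift_sup:
  assumes "n \<in> Sp M" "0 < n i"
  shows "s_plus M c p i n - s_minus M c p i n \<le> drift_sup M c p i"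
  unfolding drift_sup_def
  by (rule cSup_upper) (use assms bdd_above_drifts[of "\<lambda>n j. j = i \<and> 0 < n i"] in auto)

lemma sum_p_mult_coord:
  assumes "n \<in> Sp M"
  shows "(\<Sum>u\<in>Nb M n. p (c n) u * real_of_int (u i)) = s_plus M c p i n - s_minus M c p i n"
proof -
  have "(\<Sum>u\<in>Nb M n. p (c n) u * real_of_int (u i))
     = (\<Sum>u\<in>Nb M n. (if u i = 1 then p (c n) u else 0) - (if u i = -1 then p (c n) u else 0))"
    by (rule sum.cong) (use Nb_coord_cases[where i = i] in force)+
  also have "\<dots> = s_plus M c p i n - s_minus M c p i n"
    unfolding s_plus_def s_minus_def sum_subtractf by (simp add: sum.inter_filter finite_Nb)
  finally show ?thesis .
qed

lemma trans_op_coord_sq_le: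
  assumes "n \<in> Sp M"
  shows "trans_op (\<lambda>m. (real_of_int (m i))\<^sup>2) n
     \<le> (real_of_int (n i))\<^sup>2 + 2 * real_of_int (n i) * (s_plus M c p i n - s_minus M c p i n) + 1"
proof -
  have "trans_op (\<lambda>m. (real_of_int (m i))\<^sup>2) n
     = (\<Sum>u\<in>Nb M n. p (c n) u * (real_of_int (n i))\<^sup>2
          + 2 * real_of_int (n i) * (p (c n) u * real_of_int (u i)) + p (c n) u * (real_of_int (u i))\<^sup>2)"
    unfolding trans_op_def by (rule sum.cong) (auto simp: vadd_def power2_eq_square algebra_simps)
  also have "\<dots> = (real_of_int (n i))\<^sup>2 + 2 * real_of_int (n i) * (s_plus M c p i n - s_minus M c p i n)
     + (\<Sum>u\<in>Nb M n. p (c n) u * (real_of_int (u i))\<^sup>2)"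
    by (simp add: sum.distrib sum_distrib_left[symmetric] sum_distrib_right[symmetric]
        sum_p_eq_1[OF assms] sum_p_mult_coord[OF assms])
  also have "(\<Sum>u\<in>Nb M n. p (c n) u * (real_of_int (u i))\<^sup>2) \<le> (\<Sum>u\<in>Nb M n. p (c n) u)"
  proof (rule sum_mono)
    fix u assume u: "u \<in> Nb M n"
    have "(real_of_int (u i))\<^sup>2 \<le> 1"
      using Nb_abs_le_1[OF u, of i] by (simp add: abs_square_le_1)
    then show "p (c n) u * (real_of_int (u i))\<^sup>2 \<le> p (c n) u"
      using p_nonneg[OF assms u] mult_left_mono[of _ 1] by fastforce
  qed
  finally show ?thesis using sum_p_eq_1[OF assms] by simp
qed

end

locale negative_drift_walk = walk M c p
  for M and c :: "(nat \<Rightarrow> int) \<Rightarrow> 'k::finite" and p +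
  assumes negative_drift: "negative_drift M c p"
begin

lemma drift_sup_neg:
  assumes "i \<in> {1..M}"
  shows "drift_sup M c p i < 0"
proof -
  define e :: "nat \<Rightarrow> int" where "e = (\<lambda>j. if j = i then 1 else 0)"
  have e: "e \<in> Sp M" "0 < e i" using assms by (auto simp: e_def Sp_def)
  have "drift_sup M c p i
      \<le> Sup {s_plus M c p i n - s_minus M c p i n | n i. n \<in> Sp M \<and> i \<in> {1..M} \<and> 0 < n i}"
    unfolding drift_sup_def
    by (rule cSup_subset_mono) (use e assms bdd_above_drifts in auto)
  with negative_drift show ?thesis unfolding negative_drift_def by linarith
qed

lemma vcoef_pos: "i \<in> {1..M} \<Longrightarrow> 0 < vcoef M c p f i"
  using divide_pos_neg[OF _ drift_sup_neg] fstar_ge_1[of M f] by (simp add: vcoef_def)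

lemma vcoef_mult_drift_sup: "i \<in> {1..M} \<Longrightarrow> vcoef M c p f i * drift_sup M c p i = - fstar M f"
  using drift_sup_neg[of i] by (simp add: vcoef_def)

lemma Vfun_nonneg: "0 \<le> Vfun M c p f n"
  unfolding Vfun_def by (intro sum_nonneg mult_nonneg_nonneg) (auto simp: less_imp_le vcoef_pos)

text \<open>The drift of \<open>v\<^sub>i n\<^sub>i\<^sup>2\<close> is at most \<open>2 v\<^sub>i n\<^sub>i sup\<^sub>n (s\<^sup>+\<^sub>i - s\<^sup>-\<^sub>i) + v\<^sub>i\<close>, and the choice of \<open>v\<^sub>i\<close>
  turns the first term into \<open>-2 f\<^sup>* n\<^sub>i\<close>.\<close>

lemma trans_op_Vfun_le:
  assumes n: "n \<in> Sp M"
  shows "trans_op (Vfun M c p f) n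
    \<le> Vfun M c p f n + (\<Sum>i=1..M. vcoef M c p f i) - 2 * fstar M f * l1norm M n"
proof -
  have "vcoef M c p f i * trans_op (\<lambda>m. (real_of_int (m i))\<^sup>2) n
      \<le> vcoef M c p f i * (real_of_int (n i))\<^sup>2 + vcoef M c p f i - 2 * fstar M f * real_of_int (n i)"
    if i: "i \<in> {1..M}" for i
  proof -
    let ?v = "vcoef M c p f i" and ?d = "s_plus M c p i n - s_minus M c p i n"
    have "?v * (real_of_int (n i) * ?d) \<le> - fstar M f * real_of_int (n i)"
    proof (cases "n i = 0")
      case False
      then have "0 < n i" using Sp_nonneg[OF n, of i] by linarith
      then have "?v * ?d \<le> ?v * drift_sup M c p i"
        using drift_le_drift_sup[OF n] vcoef_pos[OF i, where f = f] by (intro mult_left_mono) auto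
      then have "?v * ?d \<le> - fstar M f"
        using vcoef_mult_drift_sup[OF i, where f = f] by linarith
      with \<open>0 < n i\<close> show ?thesis
        using mult_right_mono[of "?v * ?d" "- fstar M f" "real_of_int (n i)"] by (simp add: algebra_simps)
    qed simp
    moreover have "?v * trans_op (\<lambda>m. (real_of_int (m i))\<^sup>2) n
        \<le> ?v * ((real_of_int (n i))\<^sup>2 + 2 * real_of_int (n i) * ?d + 1)"
      using trans_op_coord_sq_le[OF n] vcoef_pos[OF i, where f = f] by (intro mult_left_mono) auto
    ultimately show ?thesis by (simp add: algebra_simps)
  qed
  note coord = this
  have "trans_op (Vfun M c p f) n = (\<Sum>i=1..M. vcoef M c p f i * trans_op (\<lambda>m. (real_of_int (m i))\<^sup>2) n)"
    unfolding Vfun_def by (simp add: trans_op_sum trans_op_cmult)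
  also have "\<dots> \<le> (\<Sum>i=1..M. vcoef M c p f i * (real_of_int (n i))\<^sup>2 + vcoef M c p f i
      - 2 * fstar M f * real_of_int (n i))"
    by (rule sum_mono) (rule coord)
  also have "\<dots> = Vfun M c p f n + (\<Sum>i=1..M. vcoef M c p f i) - 2 * fstar M f * l1norm M n"
    by (simp add: Vfun_def l1norm_def sum.distrib sum_subtractf sum_distrib_left)
  finally show ?thesis .
qed

text \<open>Outside the finite set where \<open>|n|\<^sub>1 < c\<^sub>1\<close>, the drift \<open>-2 f\<^sup>* |n|\<^sub>1\<close> of \<open>V\<close> absorbs the cost
  \<open>F + a \<le> f\<^sup>* (1 + |n|\<^sub>1) + a\<close>.\<close>

lemma hit_cost_le_Vfun:
  assumes irr: "irreducible_rw M c p" and lin: "C_linear M c F f"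
    and z: "z \<in> Sp M" and "0 \<le> a"
  shows "\<exists>K\<ge>0. \<forall>t. \<forall>n\<in>Sp M. hit_cost z (\<lambda>n. F n + a) t n \<le> Vfun M c p f n + K"
proof -
  let ?f = "fstar M f"
  define c1 where "c1 = ?f + a + (\<Sum>i=1..M. vcoef M c p f i)"
  have "0 \<le> (\<Sum>i=1..M. vcoef M c p f i)"
    by (intro sum_nonneg) (simp add: vcoef_pos less_imp_le)
  then have "0 \<le> c1"
    using \<open>0 \<le> a\<close> fstar_ge_1[of M f] by (simp add: c1_def)
  define A where "A = {n \<in> Sp M. l1norm M n < c1}"
  have drift: "F n + a + trans_op (Vfun M c p f) n \<le> Vfun M c p f n + c1 - ?f * l1norm M n"
    if "n \<in> Sp M" for n
    using C_linear_le_fstar[OF lin that] trans_op_Vfun_le[OF that, where f = f]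
    by (simp add: c1_def algebra_simps)
  show ?thesis
  proof (rule hit_cost_le_Lyapunov[where A = A and b = c1])
    show "finite A" "A \<subseteq> Sp M" using finite_l1norm_less by (auto simp: A_def)
    show "\<forall>n\<in>A. \<exists>k. 0 < Pk M c p k n z"
      using irr z by (auto simp: irreducible_rw_def A_def)
    have "0 \<le> ?f * l1norm M n" if "n \<in> Sp M" for n
      using fstar_ge_1[of M f] l1norm_nonneg[OF that] by simp
    then show "\<forall>n\<in>A. n \<noteq> z \<longrightarrow> F n + a + trans_op (Vfun M c p f) n \<le> Vfun M c p f n + c1"
      using drift by (fastforce simp: A_def)
    have "c1 \<le> ?f * l1norm M n" if "n \<in> Sp M - A" for n
      using that fstar_ge_1[of M f] l1norm_nonneg[of n M] mult_right_mono[of 1 ?f "l1norm M n"]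
      by (auto simp: A_def)
    then show "\<forall>n\<in>Sp M - A. n \<noteq> z \<longrightarrow> F n + a + trans_op (Vfun M c p f) n \<le> Vfun M c p f n"
      using drift by fastforce
  qed (use \<open>0 \<le> c1\<close> Vfun_nonneg in auto)
qed

end

theorem theorem4p2:
  fixes M :: nat
    and c :: "(nat \<Rightarrow> int) \<Rightarrow> 'k::finite"
    and p :: "'k \<Rightarrow> (nat \<Rightarrow> int) \<Rightarrow> real"
    and F :: "(nat \<Rightarrow> int) \<Rightarrow> real"
    and f :: "'k \<Rightarrow> nat \<Rightarrow> real"
  assumes "1 \<le> M"
    and "is_partition M c"
    and "valid_probs M c p"
    and "irreducible_rw M c p"
    and "aperiodic_rw M c p"
    and "positive_recurrent_rw M c p"
    and "negative_drift M c p"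
    and "\<forall>n\<in>Sp M. 0 \<le> F n"
    and "C_linear M c F f"
  shows "\<exists>b0::real. \<forall>n\<in>Sp M. \<forall>u\<in>Nb M n. \<forall>t::nat.
           \<bar>Ft M c p F t (vadd n u) - Ft M c p F t n\<bar>
             \<le> Vfun M c p f n + Vfun M c p f (vadd n u) + b0"
proof -
  interpret negative_drift_walk M c p
    using assms(3,7) by unfold_locales
  let ?V = "Vfun M c p f" and ?z = "\<lambda>_. 0 :: int"
  have z: "?z \<in> Sp M" and F_nonneg: "\<And>n. n \<in> Sp M \<Longrightarrow> 0 \<le> F n"
    using assms(8) by (auto simp: Sp_def)
  obtain K1 where "\<forall>t. \<forall>n\<in>Sp M. hit_cost ?z F t n \<le> ?V n + K1"
    using hit_cost_le_Vfun[OF assms(4,9) z order_refl] by auto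
  then have B: "\<forall>t. (trans_op ^^ t) F ?z \<le> F ?z + trans_op (\<lambda>m. ?V m + K1) ?z"
    using funpow_at_target_le[where h = F, OF F_nonneg z] by blast
  moreover have "0 \<le> F ?z + trans_op (\<lambda>m. ?V m + K1) ?z"
    using B[rule_format, of 0] F_nonneg[OF z] by simp
  ultimately obtain K2 where K2: "\<forall>t. \<forall>n\<in>Sp M.
      hit_cost ?z (\<lambda>n. F n + (F ?z + trans_op (\<lambda>m. ?V m + K1) ?z)) t n \<le> ?V n + K2"
    using hit_cost_le_Vfun[OF assms(4,9) z] by blast
  show ?thesis
  proof (intro exI[of _ "2 * K2"] ballI allI)
    fix n u t assume "n \<in> Sp M" "u \<in> Nb M n"
    then show "\<bar>Ft M c p F t (vadd n u) - Ft M c p F t n\<bar> \<le> ?V n + ?V (vadd n u) + 2 * K2"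
      using abs_cumulative_diff_le[where h = F, OF F_nonneg z B K2] vadd_in_Sp
      by (simp add: Ft_eq_cumulative)
  qed
qed

end
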